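(* Let $\bar Q$ be a locally gentle bound quiver, let $F$ be a finite face of the non-kissing complex $\mathcal K_{nk}(\bar Q)$ and let $\alpha$ be an arrow of $Q^{\mathrm{bl}}$. Then the set $F_\alpha$ of walks of $F$ marked at an occurrence of $\alpha^{\pm1}$ is either empty or has a maximal element for the countercurrent order $\prec_\alpha$.
   Context: Locally gentle bound quiver $\bar Q=(Q,I)$: $Q$ finite, $I$ an ideal of $kQ$ generated by paths of length two ($kQ/I$ possibly infinite-dimensional), each vertex with at most two incoming and two outgoing arrows, and for each arrow $\beta$ at most one $\alpha$ with $t(\alpha)=s(\beta)$, $\alpha\beta\notin I$, at most one with $\alpha\beta\in I$, and symmetrically on the outgoing side. $\bar Q^{\mathrm{bl}}$ adds degree-one blossom vertices and arrows so each vertex of $Q_0$ has two incoming and two outgoing arrows, relations completed to stay locally gentle. A walk is a maximal (finite, or eventually cyclic ${}^\infty(c_1^{\varepsilon_1})\sigma(c_2^{\varepsilon_2})^\infty$ with $c_i$ oriented cycles, possibly trivial) string of $\bar Q^{\mathrm{bl}}$, a string being a composable reduced word in arrows and formal inverses with no factor $\pi^{\pm1}$ for a path $\pi\in I$; $\omega\equiv\omega^{-1}$. For $\omega=\prod_{i<\ell<j}\alpha_\ell^{\varepsilon_\ell}$, a substring $\prod_{i'<\ell<j'}\alpha_\ell^{\varepsilon_\ell}$ ($i\le i'<j'\le j$, strict at finite ends, remembered with its position) is on top if ($i'=-\infty$ or $\varepsilon_{i'}=-1$) and ($j'=\infty$ or $\varepsilon_{j'}=1$), at the bottom if ($i'=-\infty$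 or $\varepsilon_{i'}=1$) and ($j'=\infty$ or $\varepsilon_{j'}=-1$). $\omega$ kisses $\omega'$ if a finite string is a top substring of $\omega$ and a bottom substring of $\omega'$. Faces of $\mathcal K_{nk}(\bar Q)$ are sets of pairwise non-kissing walks (none kissing itself). A marked walk is a walk together with a marked occurrence of an arrow $\alpha^{\pm1}$ in it; for an infinite straight walk ${}^\infty c^\infty$ all markings at occurrences of $\alpha^{\pm1}$ are considered equal. Countercurrent order: for two distinct non-kissing walks $\mu_\star,\nu_\star$ marked at occurrences of $\alpha^{\pm1}$, let $\sigma$ be their maximal common substring containing the marked occurrence; they split at an endpoint of $\sigma$, and $\mu_\star\prec_\alpha\nu_\star$ if $\mu_\star$ enters and/or exits $\sigma$ in the direction pointed by $\alpha$ while $\nu_\star$ enters and/or exits $\sigma$ in the direction opposite to $\alpha$. *)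

theory Defs
  imports Main
begin

text \<open>A bound quiver is given by a vertex set V, an arrow set A, source and target
maps s t, and a set R of paths of length two (pairs (a,b) meaning the path a b,
i.e. first a then b, with t a = s b) generating the ideal I.  Since I is
generated by paths of length two, a path lies in I iff it has a factor in R.\<close>

definition locally_gentle ::
  "'v set \<Rightarrow> 'a set \<Rightarrow> ('a \<Rightarrow> 'v) \<Rightarrow> ('a \<Rightarrow> 'v) \<Rightarrow> ('a \<times> 'a) set \<Rightarrow> bool" where
  "locally_gentle V A s t R \<longleftrightarrow>
     finite V \<and> finite A \<and> (\<forall>a\<in>A. s a \<in> V \<and> t a \<in> V) \<and>
     R \<subseteq> {(a, b). a \<in> A \<and> b \<in> A \<and> t a = s b} \<and>
     (\<forall>v\<in>V. card {a\<in>A. t a = v} \<le> 2 \<and> card {a\<in>A. s a = v} \<le> 2) \<and>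
     (\<forall>b\<in>A. card {a\<in>A. t a = s b \<and> (a, b) \<notin> R} \<le> 1 \<and>
             card {a\<in>A. t a = s b \<and> (a, b) \<in> R} \<le> 1) \<and>
     (\<forall>a\<in>A. card {b\<in>A. s b = t a \<and> (a, b) \<notin> R} \<le> 1 \<and>
             card {b\<in>A. s b = t a \<and> (a, b) \<in> R} \<le> 1)"

definition blossoming ::
  "'v set \<Rightarrow> 'a set \<Rightarrow> ('a \<times> 'a) set \<Rightarrow> 'v set \<Rightarrow> 'a set \<Rightarrow> ('a \<times> 'a) set \<Rightarrow>
   ('a \<Rightarrow> 'v) \<Rightarrow> ('a \<Rightarrow> 'v) \<Rightarrow> bool" where
  "blossoming V A R Vb Ab Rb s t \<longleftrightarrow>
     V \<subseteq> Vb \<and> A \<subseteq> Ab \<and> locally_gentle Vb Ab s t Rb \<and> R = Rb \<inter> (A \<times> A) \<and>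
     (\<forall>v\<in>V. card {a\<in>Ab. t a = v} = 2 \<and> card {a\<in>Ab. s a = v} = 2) \<and>
     (\<forall>v\<in>Vb - V. card {a\<in>Ab. s a = v} + card {a\<in>Ab. t a = v} = 1) \<and>
     (\<forall>a\<in>Ab - A. (s a \<in> V \<and> t a \<in> Vb - V) \<or> (s a \<in> Vb - V \<and> t a \<in> V))"

text \<open>A letter is an arrow with a sign: (a, True) is the arrow a, (a, False) is
its formal inverse a^{-1}.\<close>

type_synonym 'a letter = "'a \<times> bool"

definition lsrc :: "('a \<Rightarrow> 'v) \<Rightarrow> ('a \<Rightarrow> 'v) \<Rightarrow> 'a letter \<Rightarrow> 'v" where
  "lsrc s t x = (if snd x then s (fst x) else t (fst x))"

definition ltgt :: "('a \<Rightarrow> 'v) \<Rightarrow> ('a \<Rightarrow> 'v) \<Rightarrow> 'a letter \<Rightarrow> 'v" where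
  "ltgt s t x = (if snd x then t (fst x) else s (fst x))"

definition linv :: "'a letter \<Rightarrow> 'a letter" where
  "linv x = (fst x, \<not> snd x)"

definition ok_pair ::
  "'a set \<Rightarrow> ('a \<Rightarrow> 'v) \<Rightarrow> ('a \<Rightarrow> 'v) \<Rightarrow> ('a \<times> 'a) set \<Rightarrow> 'a letter \<Rightarrow> 'a letter \<Rightarrow> bool" where
  "ok_pair Ab s t Rb y x \<longleftrightarrow>
     fst y \<in> Ab \<and> fst x \<in> Ab \<and> ltgt s t y = lsrc s t x \<and> x \<noteq> linv y \<and>
     (snd y \<and> snd x \<longrightarrow> (fst y, fst x) \<notin> Rb) \<and>
     (\<not> snd y \<and> \<not> snd x \<longrightarrow> (fst x, fst y) \<notin> Rb)"

text \<open>A (possibly infinite) string is represented by an interval D of integers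
(its positions) and the letter at each position; the string is
prod_{l in D} L l.  Walks are identified up to shift of indices and inversion.\<close>

type_synonym 'a walkrep = "int set \<times> (int \<Rightarrow> 'a letter)"

definition is_interval :: "int set \<Rightarrow> bool" where
  "is_interval D \<longleftrightarrow> (\<forall>a b c. a \<in> D \<longrightarrow> c \<in> D \<longrightarrow> a \<le> b \<longrightarrow> b \<le> c \<longrightarrow> b \<in> D)"

definition is_string ::
  "'a set \<Rightarrow> ('a \<Rightarrow> 'v) \<Rightarrow> ('a \<Rightarrow> 'v) \<Rightarrow> ('a \<times> 'a) set \<Rightarrow> 'a walkrep \<Rightarrow> bool" where
  "is_string Ab s t Rb w \<longleftrightarrow>
     fst w \<noteq> {} \<and> is_interval (fst w) \<and> (\<forall>l\<in>fst w. fst (snd w l) \<in> Ab) \<and>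
     (\<forall>l. l \<in> fst w \<longrightarrow> l + 1 \<in> fst w \<longrightarrow> ok_pair Ab s t Rb (snd w l) (snd w (l + 1)))"

text \<open>A walk: a maximal string (it cannot be extended at a finite end), whose
infinite ends are eventually periodic with constant direction, i.e. of the form
c^infty (resp. ^infty c) for an oriented cycle c traversed forwards or backwards.\<close>

definition is_walk ::
  "'a set \<Rightarrow> ('a \<Rightarrow> 'v) \<Rightarrow> ('a \<Rightarrow> 'v) \<Rightarrow> ('a \<times> 'a) set \<Rightarrow> 'a walkrep \<Rightarrow> bool" where
  "is_walk Ab s t Rb w \<longleftrightarrow>
     is_string Ab s t Rb w \<and>
     (\<forall>h\<in>fst w. (\<forall>l\<in>fst w. l \<le> h) \<longrightarrow> \<not> (\<exists>x. ok_pair Ab s t Rb (snd w h) x)) \<and>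
     (\<forall>h\<in>fst w. (\<forall>l\<in>fst w. h \<le> l) \<longrightarrow> \<not> (\<exists>x. ok_pair Ab s t Rb x (snd w h))) \<and>
     ((\<exists>h\<in>fst w. \<forall>l\<in>fst w. l \<le> h) \<or>
      (\<exists>N p. p > 0 \<and> {N..} \<subseteq> fst w \<and>
         (\<forall>l\<ge>N. snd w (l + p) = snd w l \<and> snd (snd w l) = snd (snd w N)))) \<and>
     ((\<exists>h\<in>fst w. \<forall>l\<in>fst w. h \<le> l) \<or>
      (\<exists>N p. p > 0 \<and> {..N} \<subseteq> fst w \<and>
         (\<forall>l\<le>N. snd w (l - p) = snd w l \<and> snd (snd w l) = snd (snd w N))))"

definition wrev :: "'a walkrep \<Rightarrow> 'a walkrep" where
  "wrev w = (uminus ` fst w, \<lambda>l. linv (snd w (- l)))"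

text \<open>The finite substring with letters at positions i < l < j (i, j in D, so that
the bounding letters exist) is on top / at the bottom.\<close>

definition top_at :: "'a walkrep \<Rightarrow> int \<Rightarrow> int \<Rightarrow> bool" where
  "top_at w i j \<longleftrightarrow> i < j \<and> i \<in> fst w \<and> j \<in> fst w \<and>
     \<not> snd (snd w i) \<and> snd (snd w j)"

definition bottom_at :: "'a walkrep \<Rightarrow> int \<Rightarrow> int \<Rightarrow> bool" where
  "bottom_at w i j \<longleftrightarrow> i < j \<and> i \<in> fst w \<and> j \<in> fst w \<and>
     snd (snd w i) \<and> \<not> snd (snd w j)"

text \<open>The substrings of w at (i,j) and of w' at (k,l) are the same string: same
length, same letters and same starting vertex (relevant for empty substrings).\<close>

definition same_sub ::
  "('a \<Rightarrow> 'v) \<Rightarrow> ('a \<Rightarrow> 'v) \<Rightarrow> 'a walkrep \<Rightarrow> int \<Rightarrow> int \<Rightarrow> 'a walkrep \<Rightarrow> int \<Rightarrow> int \<Rightarrow> bool" where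
  "same_sub s t w i j w' k l \<longleftrightarrow> j - i = l - k \<and>
     ltgt s t (snd w i) = ltgt s t (snd w' k) \<and>
     (\<forall>m. 0 < m \<longrightarrow> m < j - i \<longrightarrow> snd w (i + m) = snd w' (k + m))"

definition kisses_dir :: "('a \<Rightarrow> 'v) \<Rightarrow> ('a \<Rightarrow> 'v) \<Rightarrow> 'a walkrep \<Rightarrow> 'a walkrep \<Rightarrow> bool" where
  "kisses_dir s t w w' \<longleftrightarrow>
     (\<exists>i j k l. top_at w i j \<and> bottom_at w' k l \<and> same_sub s t w i j w' k l)"

definition kisses :: "('a \<Rightarrow> 'v) \<Rightarrow> ('a \<Rightarrow> 'v) \<Rightarrow> 'a walkrep \<Rightarrow> 'a walkrep \<Rightarrow> bool" where
  "kisses s t w w' \<longleftrightarrow> kisses_dir s t w w' \<or> kisses_dir s t w (wrev w')"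

definition nk_face ::
  "'a set \<Rightarrow> ('a \<Rightarrow> 'v) \<Rightarrow> ('a \<Rightarrow> 'v) \<Rightarrow> ('a \<times> 'a) set \<Rightarrow> 'a walkrep set \<Rightarrow> bool" where
  "nk_face Ab s t Rb F \<longleftrightarrow>
     (\<forall>w\<in>F. is_walk Ab s t Rb w) \<and> (\<forall>w\<in>F. \<forall>w'\<in>F. \<not> kisses s t w w')"

text \<open>A walk w marked at position p (an occurrence of alpha^{+-1}) is represented
canonically by re-indexing (and inverting if needed) so that the marked letter is
at position 0 and reads as alpha (positively).\<close>

definition wshift :: "'a walkrep \<Rightarrow> int \<Rightarrow> 'a walkrep" where
  "wshift w p = ((\<lambda>l. l - p) ` fst w, \<lambda>k. snd w (p + k))"

definition mnorm :: "'a walkrep \<Rightarrow> int \<Rightarrow> 'a walkrep" where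
  "mnorm w p = (if snd (snd w p) then wshift w p else wshift (wrev w) (- p))"

definition marked_set :: "'a walkrep set \<Rightarrow> 'a \<Rightarrow> 'a walkrep set" where
  "marked_set F \<alpha> = {mnorm w p | w p. w \<in> F \<and> p \<in> fst w \<and> fst (snd w p) = \<alpha>}"

definition agree_at :: "'a walkrep \<Rightarrow> 'a walkrep \<Rightarrow> int \<Rightarrow> bool" where
  "agree_at m n k \<longleftrightarrow> k \<in> fst m \<and> k \<in> fst n \<and> snd m k = snd n k"

text \<open>The normalized marked walks m, n split at position k: the maximal common
substring sigma containing the marked occurrence (position 0) ends just before
position k (k > 0) or just after position k (k < 0), and both walks continue there
with different letters.\<close>

definition split_at :: "'a walkrep \<Rightarrow> 'a walkrep \<Rightarrow> int \<Rightarrow> bool" where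
  "split_at m n k \<longleftrightarrow> k \<noteq> 0 \<and> k \<in> fst m \<and> k \<in> fst n \<and> snd m k \<noteq> snd n k \<and>
     (\<forall>j. (0 \<le> j \<and> j < k) \<or> (k < j \<and> j \<le> 0) \<longrightarrow> agree_at m n j)"

text \<open>Markings of an infinite straight walk ^infty c ^infty are all identified.\<close>

definition straight_same :: "'a walkrep \<Rightarrow> 'a walkrep \<Rightarrow> bool" where
  "straight_same m n \<longleftrightarrow> fst m = UNIV \<and> fst n = UNIV \<and> (\<forall>k. snd (snd m k)) \<and>
     (\<exists>d. \<forall>k. snd n k = snd m (k + d))"

text \<open>Countercurrent order: m precedes n iff at the endpoint(s) of sigma where
they split, m enters/exits sigma along a direct arrow (in the direction pointed
by alpha) while n enters/exits along an inverse arrow (opposite to alpha).\<close>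

definition cc_less :: "'a walkrep \<Rightarrow> 'a walkrep \<Rightarrow> bool" where
  "cc_less m n \<longleftrightarrow> \<not> straight_same m n \<and> (\<exists>k. split_at m n k) \<and>
     (\<forall>k. split_at m n k \<longrightarrow> snd (snd m k) \<and> \<not> snd (snd n k))"

end

theory Submission
  imports Defs
begin

text \<open>
  Two marked walks are compared
  only at their first disagreements on either side of the mark, so a triangle argument on first
  disagreements gives transitivity; local gentleness makes direct successors and predecessors
  unique, which forbids a split at which both walks are direct and so separates distinct straight
  walks.

  A walk only matters through a bounded window of its markings: on an infinite end running along
  a cycle in the direction of its arrows, moving the mark one period further never goes up in the
  order, because the two markings first disagree where the periodic part is entered, the later
  one by a direct and the earlier one by an inverse letter. Hence finitely many markings of the
  walks of F and of their inverses are cofinal in F_alpha, and a maximal one among them is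
  maximal in F_alpha.
\<close>

lemma finite_cofinal_has_maximal:
  assumes "finite S" "S \<subseteq> T" "T \<noteq> {}"
    and cofinal: "\<forall>x\<in>T. \<exists>y\<in>S. x = y \<or> r x y"
    and irrefl: "\<forall>x\<in>T. \<not> r x x"
    and trans: "\<forall>x\<in>T. \<forall>y\<in>T. \<forall>z\<in>T. r x y \<longrightarrow> r y z \<longrightarrow> r x z"
  shows "\<exists>m\<in>T. \<forall>n\<in>T. \<not> r m n"
proof -
  let ?R = "{(y, x). x \<in> S \<and> y \<in> S \<and> r x y}"
  have "?R\<^sup>+ = ?R"
    using \<open>S \<subseteq> T\<close> trans by (intro trancl_id transI) blast
  moreover have "finite ?R"
    using \<open>finite S\<close> by (auto intro: finite_subset[of _ "S \<times> S"])
  ultimately have "wf ?R"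
    using \<open>S \<subseteq> T\<close> irrefl by (intro finite_acyclic_wf) (auto simp: acyclic_def)
  moreover obtain x where "x \<in> S" using cofinal \<open>T \<noteq> {}\<close> by blast
  ultimately obtain m where m: "m \<in> S" "\<And>y. y \<in> S \<Longrightarrow> \<not> r m y"
    by (rule wfE_min) blast
  have "\<not> r m n" if "n \<in> T" for n
    using cofinal m \<open>S \<subseteq> T\<close> trans that by blast
  then show ?thesis using m \<open>S \<subseteq> T\<close> by blast
qed

lemma linv_simps [simp]:
  "fst (linv x) = fst x" "snd (linv x) = (\<not> snd x)" "linv (linv x) = x"
  unfolding linv_def by auto

lemma wshift_simps [simp]:
  "k \<in> fst (wshift w p) \<longleftrightarrow> p + k \<in> fst w" "snd (wshift w p) k = snd w (p + k)"
  unfolding wshift_def by (auto simp: image_iff) (metis add_diff_cancel_left')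

lemma wrev_simps [simp]:
  "k \<in> fst (wrev w) \<longleftrightarrow> - k \<in> fst w" "snd (wrev w) k = linv (snd w (- k))"
  unfolding wrev_def by (auto simp: image_iff) (metis minus_minus)

text \<open>
  Reflecting positions without inverting letters maps strings of a quiver to strings of its
  opposite quiver (the converse successor relation) and preserves splits and the countercurrent
  order; this is how statements about the left of the mark are derived from those about the right.
\<close>

definition wflip :: "'a walkrep \<Rightarrow> 'a walkrep" where
  "wflip w = (uminus ` fst w, \<lambda>l. snd w (- l))"

lemma wflip_simps [simp]:
  "k \<in> fst (wflip w) \<longleftrightarrow> - k \<in> fst w" "snd (wflip w) k = snd w (- k)"
  unfolding wflip_def by (auto simp: image_iff) (metis minus_minus)

lemma wflip_wflip [simp]: "wflip (wflip w) = w"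
  by (simp add: prod_eq_iff set_eq_iff fun_eq_iff)

lemma wflip_inject [simp]: "wflip v = wflip w \<longleftrightarrow> v = w"
  by (metis wflip_wflip)

lemma wshift_wflip: "wshift (wflip w) (- p) = wflip (wshift w p)"
  by (simp add: prod_eq_iff set_eq_iff fun_eq_iff)

lemma wrev_eq_linv_wflip: "wrev w = (fst (wflip w), \<lambda>l. linv (snd (wflip w) l))"
  by (simp add: prod_eq_iff set_eq_iff fun_eq_iff)

lemma wflip_wrev: "wflip (wrev w) = (fst w, \<lambda>l. linv (snd w l))"
  by (simp add: prod_eq_iff set_eq_iff fun_eq_iff)

lemma agree_at_wflip [simp]: "agree_at (wflip m) (wflip n) k \<longleftrightarrow> agree_at m n (- k)"
  unfolding agree_at_def by simp

lemma split_at_wflip [simp]: "split_at (wflip m) (wflip n) k \<longleftrightarrow> split_at m n (- k)"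
proof -
  have "(\<forall>j. (0 \<le> j \<and> j < k \<or> k < j \<and> j \<le> 0) \<longrightarrow> agree_at m n (- j)) \<longleftrightarrow>
        (\<forall>j. (0 \<le> - j \<and> - j < k \<or> k < - j \<and> - j \<le> 0) \<longrightarrow> agree_at m n j)"
    by (metis minus_minus)
  then show ?thesis
    unfolding split_at_def by auto
qed

lemma straight_same_wflip [simp]: "straight_same (wflip m) (wflip n) \<longleftrightarrow> straight_same m n"
proof -
  have reflect: "(\<forall>k. P (- k)) \<longleftrightarrow> (\<forall>k. P k)" for P :: "int \<Rightarrow> bool"
    by (metis minus_minus)
  have "(\<forall>k. snd n (- k) = snd m (- (k + d))) \<longleftrightarrow> (\<forall>k. snd n k = snd m (k - d))" for d
    using reflect[of "\<lambda>k. snd n k = snd m (k - d)"] by simp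
  then have "(\<exists>d. \<forall>k. snd n (- k) = snd m (- (k + d))) \<longleftrightarrow> (\<exists>d. \<forall>k. snd n k = snd m (k + d))"
    by (metis diff_minus_eq_add minus_minus)
  then show ?thesis
    unfolding straight_same_def by (simp add: set_eq_iff reflect[of "\<lambda>k. k \<in> _"]
        reflect[of "\<lambda>k. snd (snd _ k)"])
qed

lemma cc_less_wflip [simp]: "cc_less (wflip m) (wflip n) \<longleftrightarrow> cc_less m n"
  unfolding cc_less_def by (metis split_at_wflip straight_same_wflip wflip_simps(2) minus_minus)

definition cc_le :: "'a walkrep \<Rightarrow> 'a walkrep \<Rightarrow> bool" where
  "cc_le m n \<longleftrightarrow> m = n \<or> cc_less m n"

lemma cc_le_wflip [simp]: "cc_le (wflip m) (wflip n) \<longleftrightarrow> cc_le m n"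
  unfolding cc_le_def by simp

section \<open>Uniqueness of direct neighbours in a locally gentle quiver\<close>

definition direct_deterministic :: "('a letter \<Rightarrow> 'a letter \<Rightarrow> bool) \<Rightarrow> bool" where
  "direct_deterministic ok \<longleftrightarrow>
     (\<forall>y x x'. ok y x \<longrightarrow> ok y x' \<longrightarrow> snd x \<longrightarrow> snd x' \<longrightarrow> x = x') \<and>
     (\<forall>y y' x. ok y x \<longrightarrow> ok y' x \<longrightarrow> snd y \<longrightarrow> snd y' \<longrightarrow> y = y')"

lemma direct_deterministic_conversep [simp]:
  "direct_deterministic ok\<inverse>\<inverse> \<longleftrightarrow> direct_deterministic ok"
  unfolding direct_deterministic_def by blast

lemma ok_pair_opposite: "ok_pair Ab t s (Rb\<inverse>) x y \<longleftrightarrow> ok_pair Ab s t Rb y x"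
  unfolding ok_pair_def lsrc_def ltgt_def linv_def by (auto simp: prod_eq_iff)

lemma locally_gentle_opposite:
  "locally_gentle V A s t R \<Longrightarrow> locally_gentle V A t s (R\<inverse>)"
  unfolding locally_gentle_def by auto

lemma card_le_2_eq:
  assumes "finite S" "card S \<le> 2" "a \<in> S" "b \<in> S" "c \<in> S" "a \<noteq> b" "a \<noteq> c"
  shows "b = c"
proof (rule ccontr)
  assume "b \<noteq> c"
  then have "card {a, b, c} = 3" using assms by auto
  moreover have "card {a, b, c} \<le> card S" using assms by (intro card_mono) auto
  ultimately show False using assms by simp
qed

lemma locally_gentle_direct_successor_unique:
  assumes lg: "locally_gentle V A s t R"
    and ok: "ok_pair A s t R y x" "ok_pair A s t R y x'" and direct: "snd x" "snd x'"
  shows "x = x'"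
proof -
  have fin: "finite A" and y: "fst y \<in> A" "s (fst y) \<in> V"
    using lg ok unfolding locally_gentle_def ok_pair_def by auto
  have "fst x = fst x'"
  proof (cases "snd y")
    case True
    then have "fst x \<in> {b\<in>A. s b = t (fst y) \<and> (fst y, b) \<notin> R}"
      "fst x' \<in> {b\<in>A. s b = t (fst y) \<and> (fst y, b) \<notin> R}"
      using ok direct unfolding ok_pair_def lsrc_def ltgt_def by auto
    moreover have "card {b\<in>A. s b = t (fst y) \<and> (fst y, b) \<notin> R} \<le> 1"
      using lg y unfolding locally_gentle_def by blast
    ultimately show ?thesis using fin by (auto simp: card_le_Suc0_iff_eq)
  next
    case False
    \<comment> \<open>x, x' and y are three arrows out of s (fst y), and x, x' differ from y as strings are reduced\<close>
    let ?S = "{a\<in>A. s a = s (fst y)}"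
    have "fst y \<in> ?S" "fst x \<in> ?S" "fst x' \<in> ?S" "fst y \<noteq> fst x" "fst y \<noteq> fst x'"
      using ok direct y False unfolding ok_pair_def lsrc_def ltgt_def linv_def
      by (auto simp: prod_eq_iff)
    moreover have "card ?S \<le> 2"
      using lg y unfolding locally_gentle_def by blast
    ultimately show ?thesis using card_le_2_eq[of ?S] fin by auto
  qed
  then show ?thesis using direct by (simp add: prod_eq_iff)
qed

lemma locally_gentle_direct_deterministic:
  assumes "locally_gentle V A s t R"
  shows "direct_deterministic (ok_pair A s t R)"
  using locally_gentle_direct_successor_unique[OF assms]
    locally_gentle_direct_successor_unique[OF locally_gentle_opposite[OF assms]]
  unfolding direct_deterministic_def ok_pair_opposite by blast

definition maximal_string :: "('a letter \<Rightarrow> 'a letter \<Rightarrow> bool) \<Rightarrow> 'a walkrep \<Rightarrow> bool" where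
  "maximal_string ok w \<longleftrightarrow> is_interval (fst w) \<and>
     (\<forall>l. l \<in> fst w \<longrightarrow> l + 1 \<in> fst w \<longrightarrow> ok (snd w l) (snd w (l + 1))) \<and>
     (\<forall>l x. l \<in> fst w \<longrightarrow> l + 1 \<notin> fst w \<longrightarrow> \<not> ok (snd w l) x) \<and>
     (\<forall>l x. l \<in> fst w \<longrightarrow> l - 1 \<notin> fst w \<longrightarrow> \<not> ok x (snd w l))"

lemma maximal_stringD:
  assumes "maximal_string ok w"
  shows "a \<in> fst w \<Longrightarrow> c \<in> fst w \<Longrightarrow> a \<le> b \<Longrightarrow> b \<le> c \<Longrightarrow> b \<in> fst w"
    and "l \<in> fst w \<Longrightarrow> l + 1 \<in> fst w \<Longrightarrow> ok (snd w l) (snd w (l + 1))"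
    and "l \<in> fst w \<Longrightarrow> l + 1 \<notin> fst w \<Longrightarrow> \<not> ok (snd w l) x"
    and "l \<in> fst w \<Longrightarrow> l - 1 \<notin> fst w \<Longrightarrow> \<not> ok x (snd w l)"
  using assms unfolding maximal_string_def is_interval_def by blast+

lemma maximal_string_wflip:
  assumes "maximal_string ok w"
  shows "maximal_string ok\<inverse>\<inverse> (wflip w)"
  unfolding maximal_string_def is_interval_def
proof (intro conjI allI impI)
  fix a b c assume "a \<in> fst (wflip w)" "c \<in> fst (wflip w)" "a \<le> b" "b \<le> c"
  then show "b \<in> fst (wflip w)" using maximal_stringD(1)[OF assms, of "- c" "- a" "- b"] by simp
next
  fix l assume "l \<in> fst (wflip w)" "l + 1 \<in> fst (wflip w)"
  then show "ok\<inverse>\<inverse> (snd (wflip w) l) (snd (wflip w) (l + 1))"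
    using maximal_stringD(2)[OF assms, of "- l - 1"] by simp
next
  fix l x assume "l \<in> fst (wflip w)" "l + 1 \<notin> fst (wflip w)"
  then show "\<not> ok\<inverse>\<inverse> (snd (wflip w) l) x"
    using maximal_stringD(4)[OF assms, of "- l"] by simp
next
  fix l x assume "l \<in> fst (wflip w)" "l - 1 \<notin> fst (wflip w)"
  then show "\<not> ok\<inverse>\<inverse> x (snd (wflip w) l)"
    using maximal_stringD(3)[OF assms, of "- l"] by simp
qed

lemma maximal_string_wshift:
  assumes "maximal_string ok w"
  shows "maximal_string ok (wshift w p)"
  unfolding maximal_string_def is_interval_def
proof (intro conjI allI impI)
  fix a b c assume "a \<in> fst (wshift w p)" "c \<in> fst (wshift w p)" "a \<le> b" "b \<le> c"
  then show "b \<in> fst (wshift w p)" using maximal_stringD(1)[OF assms, of "p + a" "p + c" "p + b"] by simp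
next
  fix l assume "l \<in> fst (wshift w p)" "l + 1 \<in> fst (wshift w p)"
  then show "ok (snd (wshift w p) l) (snd (wshift w p) (l + 1))"
    using maximal_stringD(2)[OF assms, of "p + l"] by (simp add: add.assoc)
next
  fix l x assume "l \<in> fst (wshift w p)" "l + 1 \<notin> fst (wshift w p)"
  then show "\<not> ok (snd (wshift w p) l) x"
    using maximal_stringD(3)[OF assms, of "p + l"] by (simp add: add.assoc)
next
  fix l x assume "l \<in> fst (wshift w p)" "l - 1 \<notin> fst (wshift w p)"
  then show "\<not> ok x (snd (wshift w p) l)"
    using maximal_stringD(4)[OF assms, of "p + l"] by (simp add: add_diff_eq)
qed

lemma agree_at_sym: "agree_at m n j \<longleftrightarrow> agree_at n m j"
  unfolding agree_at_def by auto

lemma agree_at_trans: "agree_at m n j \<Longrightarrow> agree_at n q j \<Longrightarrow> agree_at m q j"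
  unfolding agree_at_def by auto

lemma split_at_unique: "split_at m n k \<Longrightarrow> split_at m n k' \<Longrightarrow> 0 < k \<longleftrightarrow> 0 < k' \<Longrightarrow> k = k'"
  unfolding split_at_def agree_at_def by (metis linorder_neqE_linordered_idom order.strict_iff_not)

lemma maximal_string_agree_extends:
  assumes "maximal_string ok m" "maximal_string ok n" "agree_at m n j" "j + 1 \<in> fst m"
  shows "j + 1 \<in> fst n"
  using assms maximal_stringD(2,3) unfolding agree_at_def by metis

lemma split_at_before_disagreement:
  assumes m: "maximal_string ok m" and n: "maximal_string ok n" and "agree_at m n 0"
    and j: "0 \<le> j" "j \<in> fst m" "\<not> agree_at m n j"
  shows "\<exists>k. 0 < k \<and> k \<le> j \<and> split_at m n k"
proof -
  define k where "k = Min {i. 0 \<le> i \<and> i \<le> j \<and> \<not> agree_at m n i}"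
  have fin: "finite {i. 0 \<le> i \<and> i \<le> j \<and> \<not> agree_at m n i}"
    by (rule finite_subset[of _ "{0..j}"]) auto
  have k: "0 \<le> k" "k \<le> j" "\<not> agree_at m n k"
    using Min_in[OF fin] j unfolding k_def by auto
  have before: "agree_at m n i" if "0 \<le> i" "i < k" for i
    using Min_le[OF fin, of i] that k unfolding k_def by fastforce
  have "0 < k" using k \<open>agree_at m n 0\<close> by (cases "k = 0") auto
  have "k \<in> fst m"
    using maximal_stringD(1)[OF m _ j(2)] \<open>agree_at m n 0\<close> k unfolding agree_at_def by blast
  moreover have "k \<in> fst n"
    using maximal_string_agree_extends[OF m n before[of "k - 1"]] \<open>0 < k\<close> \<open>k \<in> fst m\<close> by simp
  ultimately have "split_at m n k"
    unfolding split_at_def using \<open>0 < k\<close> k(3) before by (auto simp: agree_at_def)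
  then show ?thesis using \<open>0 < k\<close> k by blast
qed

lemma split_at_not_both_direct:
  assumes det: "direct_deterministic ok"
    and m: "maximal_string ok m" and n: "maximal_string ok n" and split: "split_at m n k"
  shows "\<not> (snd (snd m k) \<and> snd (snd n k))"
proof
  assume direct: "snd (snd m k) \<and> snd (snd n k)"
  have k: "k \<in> fst m" "k \<in> fst n" "snd m k \<noteq> snd n k" "k \<noteq> 0"
    using split unfolding split_at_def by auto
  show False
  proof (cases "0 < k")
    case True
    then have "agree_at m n (k - 1)" using split unfolding split_at_def by simp
    then have "ok (snd m (k - 1)) (snd m k)" "ok (snd m (k - 1)) (snd n k)"
      using maximal_stringD(2)[OF m, of "k - 1"] maximal_stringD(2)[OF n, of "k - 1"] k
      unfolding agree_at_def by auto
    then show False using det direct k unfolding direct_deterministic_def by blast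
  next
    case False
    then have "agree_at m n (k + 1)" using split k unfolding split_at_def by simp
    then have "ok (snd m k) (snd m (k + 1))" "ok (snd n k) (snd m (k + 1))"
      using maximal_stringD(2)[OF m, of k] maximal_stringD(2)[OF n, of k] k
      unfolding agree_at_def by auto
    then show False using det direct k unfolding direct_deterministic_def by blast
  qed
qed


lemma split_at_not_straight_same:
  assumes "direct_deterministic ok" "maximal_string ok m" "maximal_string ok n" "split_at m n k"
  shows "\<not> straight_same m n"
proof
  assume "straight_same m n"
  then obtain d where "\<forall>k. snd (snd m k)" "\<forall>k. snd n k = snd m (k + d)"
    unfolding straight_same_def by blast
  then show False using split_at_not_both_direct[OF assms] by simp
qed

section \<open>Transitivity of the countercurrent order\<close>

definition marked_string :: "('a letter \<Rightarrow> 'a letter \<Rightarrow> bool) \<Rightarrow> 'a \<Rightarrow> 'a walkrep \<Rightarrow> bool" where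
  "marked_string ok \<alpha> m \<longleftrightarrow> maximal_string ok m \<and> 0 \<in> fst m \<and> snd m 0 = (\<alpha>, True)"

lemma marked_string_wflip:
  "marked_string ok \<alpha> m \<Longrightarrow> marked_string ok\<inverse>\<inverse> \<alpha> (wflip m)"
  unfolding marked_string_def by (simp add: maximal_string_wflip)

lemma marked_string_agree_at_0:
  "marked_string ok \<alpha> m \<Longrightarrow> marked_string ok \<alpha> n \<Longrightarrow> agree_at m n 0"
  unfolding marked_string_def agree_at_def by simp

lemma cc_less_dir: "cc_less m n \<Longrightarrow> split_at m n k \<Longrightarrow> snd (snd m k) \<and> \<not> snd (snd n k)"
  unfolding cc_less_def by blast

lemma cc_less_chain_split_dir_right:
  assumes m: "marked_string ok \<alpha> m" and n: "marked_string ok \<alpha> n" and q: "marked_string ok \<alpha> q"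
    and mn: "cc_less m n" and nq: "cc_less n q" and mq: "split_at m q k" and "0 < k"
  shows "snd (snd m k) \<and> \<not> snd (snd q k)"
proof -
  have k: "k \<in> fst m" "k \<in> fst q" "snd m k \<noteq> snd q k"
    using mq unfolding split_at_def by auto
  have agree_mq: "agree_at m q j" if "0 \<le> j" "j < k" for j
    using mq that unfolding split_at_def by auto
  have split_nq: "split_at n q i"
    if "0 < i" "i \<le> k" "\<forall>j. 0 \<le> j \<and> j < i \<longrightarrow> agree_at m n j"
      "i \<in> fst n" "i \<in> fst q" "snd n i \<noteq> snd q i" for i
  proof -
    have "agree_at n q j" if "0 \<le> j" "j < i" for j
    proof -
      have "agree_at m n j" "agree_at m q j"
        using that \<open>\<forall>j. 0 \<le> j \<and> j < i \<longrightarrow> agree_at m n j\<close> agree_mq \<open>i \<le> k\<close> by auto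
      then show ?thesis by (metis agree_at_sym agree_at_trans)
    qed
    then show ?thesis unfolding split_at_def using that by auto
  qed
  show ?thesis
  proof (cases "\<forall>j. 0 \<le> j \<and> j < k \<longrightarrow> agree_at m n j")
    case True
    then have "k \<in> fst n"
      using maximal_string_agree_extends[of ok m n "k - 1"] m n k \<open>0 < k\<close>
      unfolding marked_string_def by simp
    show ?thesis
    proof (cases "snd m k = snd n k")
      case True
      then show ?thesis
        using split_nq[OF \<open>0 < k\<close> order.refl] cc_less_dir[OF nq] \<open>k \<in> fst n\<close> k
          \<open>\<forall>j. 0 \<le> j \<and> j < k \<longrightarrow> agree_at m n j\<close> by auto
    next
      case False
      then have "split_at m n k"
        using True \<open>0 < k\<close> \<open>k \<in> fst n\<close> k unfolding split_at_def by auto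
      then show ?thesis
        using split_nq[OF \<open>0 < k\<close> order.refl True \<open>k \<in> fst n\<close> k(2)]
          cc_less_dir[OF mn] cc_less_dir[OF nq] by metis
    qed
  next
    case False
    then obtain j where "0 \<le> j" "j < k" "\<not> agree_at m n j" by blast
    moreover have "j \<in> fst m"
      using agree_mq[OF \<open>0 \<le> j\<close> \<open>j < k\<close>] unfolding agree_at_def by blast
    ultimately obtain i where i: "0 < i" "i < k" "split_at m n i"
      using split_at_before_disagreement[of ok m n j] m n marked_string_agree_at_0[OF m n]
      unfolding marked_string_def by force
    have "i \<in> fst n" "\<forall>j. 0 \<le> j \<and> j < i \<longrightarrow> agree_at m n j" "snd m i \<noteq> snd n i"
      using i(3) unfolding split_at_def by auto
    moreover have "i \<in> fst q" "snd m i = snd q i"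
      using agree_mq[of i] i unfolding agree_at_def by auto
    ultimately have "split_at n q i"
      using split_nq[of i] i by auto
    then show ?thesis using cc_less_dir[OF mn i(3)] cc_less_dir[OF nq] by blast
  qed
qed

lemma cc_less_chain_split_exists_right:
  assumes m: "marked_string ok \<alpha> m" and n: "marked_string ok \<alpha> n" and q: "marked_string ok \<alpha> q"
    and mn: "cc_less m n" and nq: "cc_less n q" and split_mn: "split_at m n a" and "0 < a"
  shows "\<exists>k. split_at m q k"
proof (cases "\<forall>j. 0 \<le> j \<and> j \<le> a \<longrightarrow> agree_at m q j")
  case True
  \<comment> \<open>then n splits from q at a, where n would have to be both inverse and direct\<close>
  have "agree_at n q j" if "0 \<le> j" "j < a" for j
  proof -
    have "agree_at m n j" "agree_at m q j"
      using True split_mn that unfolding split_at_def by auto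
    then show ?thesis by (metis agree_at_sym agree_at_trans)
  qed
  moreover have "a \<in> fst n" "a \<in> fst q" "snd n a \<noteq> snd q a"
    using True split_mn \<open>0 < a\<close> unfolding split_at_def agree_at_def by auto
  ultimately have "split_at n q a"
    using \<open>0 < a\<close> unfolding split_at_def by auto
  then show ?thesis using cc_less_dir[OF mn split_mn] cc_less_dir[OF nq] by blast
next
  case False
  then obtain j where j: "0 \<le> j" "j \<le> a" "\<not> agree_at m q j" by blast
  have "0 \<in> fst m" "a \<in> fst m"
    using m split_mn unfolding marked_string_def split_at_def by auto
  then have "j \<in> fst m"
    using maximal_stringD(1)[of ok m] m j unfolding marked_string_def by blast
  then show ?thesis
    using split_at_before_disagreement[of ok m q j] m q j marked_string_agree_at_0[OF m q]
    unfolding marked_string_def by blast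
qed

lemma cc_less_trans:
  assumes det: "direct_deterministic ok"
    and m: "marked_string ok \<alpha> m" and n: "marked_string ok \<alpha> n" and q: "marked_string ok \<alpha> q"
    and mn: "cc_less m n" and nq: "cc_less n q"
  shows "cc_less m q"
proof -
  note flipped = marked_string_wflip[OF m] marked_string_wflip[OF n] marked_string_wflip[OF q]
  have split: "\<exists>k. split_at m q k"
  proof -
    obtain a where a: "split_at m n a" using mn unfolding cc_less_def by blast
    show ?thesis
    proof (cases "0 < a")
      case True
      then show ?thesis using cc_less_chain_split_exists_right[OF m n q mn nq a] by blast
    next
      case False
      then have "0 < - a" using a unfolding split_at_def by auto
      then obtain k where "split_at (wflip m) (wflip q) k"
        using cc_less_chain_split_exists_right[OF flipped, of "- a"] mn nq a by auto
      then show ?thesis by auto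
    qed
  qed
  have dir: "snd (snd m k) \<and> \<not> snd (snd q k)" if k: "split_at m q k" for k
  proof (cases "0 < k")
    case True
    then show ?thesis using cc_less_chain_split_dir_right[OF m n q mn nq k] by blast
  next
    case False
    then have "0 < - k" using k unfolding split_at_def by auto
    then show ?thesis
      using cc_less_chain_split_dir_right[OF flipped, of "- k"] mn nq k by auto
  qed
  have "\<not> straight_same m q"
    using split split_at_not_straight_same[OF det, of m q] m q unfolding marked_string_def by blast
  then show ?thesis unfolding cc_less_def using split dir by blast
qed

lemma cc_less_irrefl: "\<not> cc_less m m"
  unfolding cc_less_def split_at_def by auto

section \<open>Markings on periodic ends\<close>

lemma periodic_iterate:
  fixes f :: "int \<Rightarrow> 'b"
  assumes "\<forall>l\<ge>a. f (l + P) = f l" "a \<le> l" "0 \<le> P"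
  shows "f (l + int k * P) = f l"
proof (induction k)
  case (Suc k)
  have "0 \<le> int k * P" using assms(3) by simp
  then have "a \<le> l + int k * P" using assms(2) by linarith
  then have "f (l + int k * P + P) = f (l + int k * P)" using assms(1) by blast
  then show ?case using Suc by (simp add: algebra_simps)
qed simp

lemma periodic_eventually_all:
  fixes f :: "int \<Rightarrow> 'b"
  assumes "\<forall>l\<ge>a. f (l + P) = f l" "0 < P" "\<forall>l\<ge>b. R (f l)" "a \<le> i"
  shows "R (f i)"
proof -
  have "f (i + int k * P) = f i" for k
    using periodic_iterate[of a f P i] assms by simp
  moreover have "b \<le> i + int (nat (b - i)) * P"
  proof (cases "b \<le> i")
    case False
    have "b - i \<le> (b - i) * P"
      using False \<open>0 < P\<close> mult_left_mono[of 1 P "b - i"] by simp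
    moreover have "int (nat (b - i)) = b - i" using False by simp
    ultimately show ?thesis by simp
  qed simp
  ultimately show ?thesis using assms(3) by metis
qed

lemma cc_less_if_unique_split:
  assumes "split_at m n k" "snd (snd m k)" "\<not> snd (snd n k)"
    and "\<forall>k'. split_at m n k' \<longrightarrow> k' = k"
  shows "cc_less m n"
proof -
  have "\<not> straight_same m n"
    using \<open>\<not> snd (snd n k)\<close> unfolding straight_same_def by metis
  then show ?thesis unfolding cc_less_def using assms by blast
qed

lemma cc_less_shift_at_periodicity_break:
  assumes det: "direct_deterministic ok" and w: "maximal_string ok w" and "0 < P" and "j < p"
    and periodic: "\<forall>i>j. i \<in> fst w \<and> snd w (i + P) = snd w i"
    and direct: "\<forall>i>j. snd (snd w i)"
    and break: "\<not> (j \<in> fst w \<and> snd w (j + P) = snd w j)"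
  shows "cc_less (wshift w (p + P)) (wshift w p)"
proof -
  have in_w: "j + 1 \<in> fst w" "j + P \<in> fst w" "j + P + 1 \<in> fst w"
    using periodic \<open>0 < P\<close> by simp_all
  moreover have "snd w (j + P + 1) = snd w (j + 1)"
    using periodic[rule_format, of "j + 1"] by (simp add: add_ac)
  ultimately have ok_P: "ok (snd w (j + P)) (snd w (j + 1))"
    using maximal_stringD(2)[OF w, of "j + P"] by simp
  then have "j \<in> fst w"
    using maximal_stringD(4)[OF w in_w(1)] by fastforce
  then have differ: "snd w (j + P) \<noteq> snd w j"
    using break by simp
  \<comment> \<open>both letters precede the letter at j + 1, and the one at j + P is direct\<close>
  moreover have "ok (snd w j) (snd w (j + 1))"
    using maximal_stringD(2)[OF w \<open>j \<in> fst w\<close> in_w(1)] .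
  moreover have "snd (snd w (j + P))" using direct \<open>0 < P\<close> by simp
  ultimately have inverse: "\<not> snd (snd w j)"
    using det ok_P unfolding direct_deterministic_def by blast
  have "agree_at (wshift w (p + P)) (wshift w p) i" if "j - p < i" for i
    using periodic[rule_format, of "p + i"] periodic[rule_format, of "p + i + P"] that \<open>0 < P\<close>
    unfolding agree_at_def by (simp add: add_ac)
  then have split: "split_at (wshift w (p + P)) (wshift w p) (j - p)"
    unfolding split_at_def using \<open>j < p\<close> in_w \<open>j \<in> fst w\<close> differ by (auto simp: add_ac)
  have "k = j - p" if "split_at (wshift w (p + P)) (wshift w p) k" for k
  proof (cases "0 < k")
    case True
    then have "snd w (p + k + P) = snd w (p + k)" using periodic \<open>j < p\<close> by simp
    then show ?thesis using that unfolding split_at_def by (simp add: add_ac)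
  next
    case False
    then show ?thesis using split_at_unique[OF that split] \<open>j < p\<close> by simp
  qed
  then show ?thesis
    using cc_less_if_unique_split[OF split] \<open>snd (snd w (j + P))\<close> inverse by (simp add: add_ac)
qed

lemma cc_le_shift_along_periodic_tail:
  assumes det: "direct_deterministic ok" and w: "maximal_string ok w" and "0 < P"
    and tail: "\<forall>l\<ge>p. l \<in> fst w \<and> snd w (l + P) = snd w l \<and> snd (snd w l)"
  shows "cc_le (wshift w (p + P)) (wshift w p)"
proof (cases "\<forall>i. i \<in> fst w \<and> snd w (i + P) = snd w i")
  case True
  then have "snd w (p + P + k) = snd w (p + k)" "p + P + k \<in> fst w" "p + k \<in> fst w" for k
    by (metis add.commute add.left_commute)+
  then show ?thesis unfolding cc_le_def by (simp add: prod_eq_iff set_eq_iff fun_eq_iff)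
next
  case False
  define Q where "Q i \<longleftrightarrow> i \<in> fst w \<and> snd w (i + P) = snd w i" for i
  obtain i where "\<not> Q i" using False unfolding Q_def by blast
  then have "\<not> Q (p - int (nat (p - i)))"
    using tail unfolding Q_def by (cases "p \<le> i") auto
  then obtain n where n: "\<not> Q (p - int n)" "\<forall>n'<n. Q (p - int n')"
    using exists_least_iff[of "\<lambda>n. \<not> Q (p - int n)"] by blast
  \<comment> \<open>p - n is the last position before p at which w fails to be P-periodic\<close>
  have periodic: "\<forall>i>p - int n. i \<in> fst w \<and> snd w (i + P) = snd w i"
  proof (intro allI impI)
    fix i assume "p - int n < i"
    then show "i \<in> fst w \<and> snd w (i + P) = snd w i"
      using tail n(2)[rule_format, of "nat (p - i)"] unfolding Q_def by (cases "p \<le> i") auto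
  qed
  moreover have "\<forall>i>p - int n. snd (snd w i)"
    using periodic_eventually_all[of "p - int n + 1" "snd w" P p "\<lambda>x. snd x"] periodic tail \<open>0 < P\<close>
    by simp
  moreover have "p - int n < p" using n(1) tail unfolding Q_def by (cases n) auto
  ultimately show ?thesis
    using cc_less_shift_at_periodicity_break[OF det w \<open>0 < P\<close>] n(1) unfolding Q_def cc_le_def by blast
qed

lemma cc_le_shift_into_first_period:
  assumes det: "direct_deterministic ok" and w: "maximal_string ok w" and "0 < P"
    and tail: "{N..} \<subseteq> fst w" and periodic: "\<forall>l\<ge>N. snd w (l + P) = snd w l \<and> snd (snd w l)"
    and "N \<le> p"
  shows "\<exists>p'\<in>{N..<N + P}. snd w p' = snd w p \<and> cc_le (wshift w p) (wshift w p')"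
proof -
  define k where "k = nat ((p - N) div P)"
  define p0 where "p0 = p - int k * P"
  have "p0 = N + (p - N) mod P"
    using \<open>0 < P\<close> \<open>N \<le> p\<close> pos_imp_zdiv_nonneg_iff[of P "p - N"] unfolding p0_def k_def
    by (simp add: algebra_simps minus_mod_eq_mult_div[symmetric])
  then have p0: "N \<le> p0" "p0 < N + P" using \<open>0 < P\<close> by simp_all
  have iterate: "snd w (l + int j * P) = snd w l" if "N \<le> l" for l j
    using periodic_iterate[of N "snd w" P] periodic \<open>0 < P\<close> that by simp
  have "snd w p = snd w p0" using iterate[OF p0(1), of k] unfolding p0_def by simp
  moreover have "cc_le (wshift w p) (wshift w p0)"
  proof (cases "k = 0")
    case True
    then show ?thesis unfolding p0_def cc_le_def by simp
  next
    case False
    have "\<forall>l\<ge>p0. l \<in> fst w \<and> snd w (l + int k * P) = snd w l \<and> snd (snd w l)"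
      using tail iterate periodic p0(1) by (meson atLeast_iff order.trans subsetD)
    then show ?thesis
      using cc_le_shift_along_periodic_tail[OF det w, of "int k * P" p0] False \<open>0 < P\<close>
      unfolding p0_def by simp
  qed
  ultimately show ?thesis using p0 by auto
qed

definition regular_right_end :: "'a walkrep \<Rightarrow> bool" where
  "regular_right_end w \<longleftrightarrow> (\<exists>h\<in>fst w. \<forall>l\<in>fst w. l \<le> h) \<or>
     (\<exists>N P. 0 < P \<and> {N..} \<subseteq> fst w \<and>
        (\<forall>l\<ge>N. snd w (l + P) = snd w l \<and> snd (snd w l) = snd (snd w N)))"

lemma regular_right_end_window:
  assumes det: "direct_deterministic ok" and w: "maximal_string ok w" and "regular_right_end w"
  shows "\<exists>N W. finite W \<and> W \<subseteq> fst w \<and> (\<forall>p\<in>fst w. N \<le> p \<longrightarrow> snd (snd w p) \<longrightarrow>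
           (\<exists>p'\<in>W. snd w p' = snd w p \<and> cc_le (wshift w p) (wshift w p')))"
  using \<open>regular_right_end w\<close> unfolding regular_right_end_def
proof (elim disjE exE bexE conjE)
  fix h assume "h \<in> fst w" "\<forall>l\<in>fst w. l \<le> h"
  then show ?thesis by (intro exI[of _ "h + 1"] exI[of _ "{}"]) auto
next
  fix N P assume "0 < P" and tail: "{N..} \<subseteq> fst w"
    and periodic: "\<forall>l\<ge>N. snd w (l + P) = snd w l \<and> snd (snd w l) = snd (snd w N)"
  have "\<exists>p'\<in>{N..<N + P}. snd w p' = snd w p \<and> cc_le (wshift w p) (wshift w p')"
    if "N \<le> p" "snd (snd w p)" for p
  proof -
    have "\<forall>l\<ge>N. snd w (l + P) = snd w l \<and> snd (snd w l)"
      using periodic that by metis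
    then show ?thesis using cc_le_shift_into_first_period[OF det w \<open>0 < P\<close> tail] that by blast
  qed
  then show ?thesis
    using tail by (intro exI[of _ N] exI[of _ "{N..<N + P}"]) auto
qed

text \<open>The left end of w is the right end of \<^term>\<open>wflip w\<close>.\<close>

definition regular_ends :: "'a walkrep \<Rightarrow> bool" where
  "regular_ends w \<longleftrightarrow> regular_right_end w \<and> regular_right_end (wflip w)"

lemma marking_window:
  assumes det: "direct_deterministic ok" and w: "maximal_string ok w" and "regular_ends w"
  shows "\<exists>W. finite W \<and> W \<subseteq> fst w \<and> (\<forall>p\<in>fst w. snd (snd w p) \<longrightarrow>
           (\<exists>p'\<in>W. snd w p' = snd w p \<and> cc_le (wshift w p) (wshift w p')))"
proof -
  obtain N1 W1 where W1: "finite W1" "W1 \<subseteq> fst w"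
    "\<forall>p\<in>fst w. N1 \<le> p \<longrightarrow> snd (snd w p) \<longrightarrow>
       (\<exists>p'\<in>W1. snd w p' = snd w p \<and> cc_le (wshift w p) (wshift w p'))"
    using regular_right_end_window[OF det w] \<open>regular_ends w\<close> unfolding regular_ends_def by blast
  obtain N2 W2 where W2: "finite W2" "W2 \<subseteq> fst (wflip w)"
    "\<forall>p\<in>fst (wflip w). N2 \<le> p \<longrightarrow> snd (snd (wflip w) p) \<longrightarrow>
       (\<exists>p'\<in>W2. snd (wflip w) p' = snd (wflip w) p \<and>
          cc_le (wshift (wflip w) p) (wshift (wflip w) p'))"
    using regular_right_end_window[of "ok\<inverse>\<inverse>" "wflip w"] det maximal_string_wflip[OF w] \<open>regular_ends w\<close>
    unfolding regular_ends_def by auto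
  have left: "\<exists>p'\<in>uminus ` W2. snd w p' = snd w p \<and> cc_le (wshift w p) (wshift w p')"
    if p: "p \<in> fst w" "p \<le> - N2" "snd (snd w p)" for p
  proof -
    obtain q where "q \<in> W2" "snd w (- q) = snd w p"
      "cc_le (wshift (wflip w) (- p)) (wshift (wflip w) q)"
      using W2(3)[rule_format, of "- p"] p by auto
    moreover have "wshift (wflip w) q = wflip (wshift w (- q))"
      using wshift_wflip[of w "- q"] by simp
    ultimately show ?thesis by (intro bexI[of _ "- q"]) (simp_all add: wshift_wflip)
  qed
  show ?thesis
  proof (intro exI[of _ "W1 \<union> uminus ` W2 \<union> {p\<in>fst w. - N2 < p \<and> p < N1}"] conjI ballI impI)
    show "finite (W1 \<union> uminus ` W2 \<union> {p\<in>fst w. - N2 < p \<and> p < N1})"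
      using W1(1) W2(1) by (auto intro: finite_subset[of _ "{- N2..N1}"])
    show "W1 \<union> uminus ` W2 \<union> {p\<in>fst w. - N2 < p \<and> p < N1} \<subseteq> fst w"
      using W1(2) W2(2) by auto
  next
    fix p assume "p \<in> fst w" "snd (snd w p)"
    then show "\<exists>p'\<in>W1 \<union> uminus ` W2 \<union> {p\<in>fst w. - N2 < p \<and> p < N1}.
                 snd w p' = snd w p \<and> cc_le (wshift w p) (wshift w p')"
      using W1(3) left[of p] unfolding cc_le_def by (cases "N1 \<le> p"; cases "p \<le> - N2") auto
  qed
qed

lemma ok_pair_linv: "ok_pair Ab s t Rb (linv x) (linv y) \<longleftrightarrow> ok_pair Ab s t Rb y x"
  unfolding ok_pair_def by (cases x; cases y; auto simp: linv_def lsrc_def ltgt_def)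

lemma maximal_string_wrev:
  assumes "maximal_string (ok_pair Ab s t Rb) w"
  shows "maximal_string (ok_pair Ab s t Rb) (wrev w)"
  unfolding maximal_string_def
proof (intro conjI allI impI)
  show "is_interval (fst (wrev w))"
    using maximal_string_wflip[OF assms] unfolding maximal_string_def wrev_eq_linv_wflip by simp
next
  fix l assume "l \<in> fst (wrev w)" "l + 1 \<in> fst (wrev w)"
  then show "ok_pair Ab s t Rb (snd (wrev w) l) (snd (wrev w) (l + 1))"
    using maximal_stringD(2)[OF assms, of "- l - 1"] by (simp add: ok_pair_linv)
next
  fix l x assume "l \<in> fst (wrev w)" "l + 1 \<notin> fst (wrev w)"
  then show "\<not> ok_pair Ab s t Rb (snd (wrev w) l) x"
    using maximal_stringD(4)[OF assms, of "- l" "linv x"] ok_pair_linv[of Ab s t Rb _ "linv x"]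
    by auto
next
  fix l x assume "l \<in> fst (wrev w)" "l - 1 \<notin> fst (wrev w)"
  then show "\<not> ok_pair Ab s t Rb x (snd (wrev w) l)"
    using maximal_stringD(3)[OF assms, of "- l" "linv x"] ok_pair_linv[of Ab s t Rb "linv x"]
    by auto
qed

lemma is_walk_maximal_string:
  assumes "is_walk Ab s t Rb w"
  shows "maximal_string (ok_pair Ab s t Rb) w"
proof -
  have interval: "is_interval (fst w)"
    and steps: "\<forall>l. l \<in> fst w \<longrightarrow> l + 1 \<in> fst w \<longrightarrow> ok_pair Ab s t Rb (snd w l) (snd w (l + 1))"
    and ends: "\<forall>h\<in>fst w. (\<forall>l\<in>fst w. l \<le> h) \<longrightarrow> \<not> (\<exists>x. ok_pair Ab s t Rb (snd w h) x)"
      "\<forall>h\<in>fst w. (\<forall>l\<in>fst w. h \<le> l) \<longrightarrow> \<not> (\<exists>x. ok_pair Ab s t Rb x (snd w h))"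
    using assms unfolding is_walk_def is_string_def by blast+
  have "l \<le> h" if "h \<in> fst w" "h + 1 \<notin> fst w" "l \<in> fst w" for h l
    using interval[unfolded is_interval_def, rule_format, of h l "h + 1"] that by linarith
  moreover have "h \<le> l" if "h \<in> fst w" "h - 1 \<notin> fst w" "l \<in> fst w" for h l
    using interval[unfolded is_interval_def, rule_format, of l h "h - 1"] that by linarith
  ultimately show ?thesis
    using interval steps ends unfolding maximal_string_def by blast
qed

lemma regular_right_end_linv:
  "regular_right_end (fst w, \<lambda>l. linv (snd w l)) \<longleftrightarrow> regular_right_end w"
proof -
  have "linv x = linv y \<longleftrightarrow> x = y" for x y :: "'a letter"
    by (metis linv_simps(3))
  then show ?thesis unfolding regular_right_end_def by simp
qed

lemma regular_ends_wrev: "regular_ends (wrev w) \<longleftrightarrow> regular_ends w"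
proof -
  have "regular_right_end (wrev w) \<longleftrightarrow> regular_right_end (wflip w)"
    using regular_right_end_linv[of "wflip w"] by (simp only: wrev_eq_linv_wflip[symmetric])
  moreover have "regular_right_end (wflip (wrev w)) \<longleftrightarrow> regular_right_end w"
    using regular_right_end_linv[of w] by (simp only: wflip_wrev)
  ultimately show ?thesis unfolding regular_ends_def by blast
qed

lemma is_walk_regular_ends:
  assumes "is_walk Ab s t Rb w"
  shows "regular_ends w"
proof -
  have right: "regular_right_end w"
    using assms unfolding is_walk_def regular_right_end_def by blast
  have "(\<exists>h\<in>fst w. \<forall>l\<in>fst w. h \<le> l) \<or>
      (\<exists>N P. 0 < P \<and> {..N} \<subseteq> fst w \<and>
         (\<forall>l\<le>N. snd w (l - P) = snd w l \<and> snd (snd w l) = snd (snd w N)))"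
    using assms unfolding is_walk_def by blast
  then have "regular_right_end (wflip w)"
  proof (elim disjE exE bexE conjE)
    fix h assume h: "h \<in> fst w" "\<forall>l\<in>fst w. h \<le> l"
    have "l \<le> - h" if "l \<in> fst (wflip w)" for l
      using bspec[OF h(2), of "- l"] that by simp
    moreover have "- h \<in> fst (wflip w)" using h by simp
    ultimately show ?thesis unfolding regular_right_end_def by blast
  next
    fix N P assume "0 < P" "{..N} \<subseteq> fst w"
      and periodic: "\<forall>l\<le>N. snd w (l - P) = snd w l \<and> snd (snd w l) = snd (snd w N)"
    have "{- N..} \<subseteq> fst (wflip w)"
      using \<open>{..N} \<subseteq> fst w\<close> by (auto simp: subset_eq)
    moreover have "snd (wflip w) (l + P) = snd (wflip w) l \<and>
        snd (snd (wflip w) l) = snd (snd (wflip w) (- N))" if "- N \<le> l" for l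
    proof -
      have "- (l + P) = - l - P" by linarith
      then show ?thesis using periodic[rule_format, of "- l"] that unfolding wflip_simps by simp
    qed
    ultimately show ?thesis
      using \<open>0 < P\<close> unfolding regular_right_end_def by blast
  qed
  then show ?thesis using right unfolding regular_ends_def by blast
qed

lemma marked_set_eq:
  "marked_set F \<alpha> =
     {wshift w p | w p. w \<in> F \<union> wrev ` F \<and> p \<in> fst w \<and> snd w p = (\<alpha>, True)}"
proof (intro set_eqI iffI)
  fix m assume "m \<in> marked_set F \<alpha>"
  then obtain w p where w: "w \<in> F" "p \<in> fst w" "fst (snd w p) = \<alpha>" "m = mnorm w p"
    unfolding marked_set_def by blast
  show "m \<in> {wshift w p | w p. w \<in> F \<union> wrev ` F \<and> p \<in> fst w \<and> snd w p = (\<alpha>, True)}"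
  proof (cases "snd (snd w p)")
    case True
    then have "m = wshift w p" "snd w p = (\<alpha>, True)"
      using w unfolding mnorm_def by (auto simp: prod_eq_iff)
    then show ?thesis using w by blast
  next
    case False
    then have "m = wshift (wrev w) (- p)" "snd (wrev w) (- p) = (\<alpha>, True)"
      using w unfolding mnorm_def by (auto simp: prod_eq_iff)
    moreover have "wrev w \<in> F \<union> wrev ` F" "- p \<in> fst (wrev w)" using w by auto
    ultimately show ?thesis by blast
  qed
next
  fix m assume "m \<in> {wshift w p | w p. w \<in> F \<union> wrev ` F \<and> p \<in> fst w \<and> snd w p = (\<alpha>, True)}"
  then obtain w p where w: "w \<in> F \<union> wrev ` F" "p \<in> fst w" "snd w p = (\<alpha>, True)" "m = wshift w p"
    by blast
  show "m \<in> marked_set F \<alpha>"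
  proof (cases "w \<in> F")
    case True
    have "m = mnorm w p" using w unfolding mnorm_def by simp
    moreover have "fst (snd w p) = \<alpha>" using w by simp
    ultimately show ?thesis using True w(2) unfolding marked_set_def by blast
  next
    case False
    then obtain v where "v \<in> F" "w = wrev v" using w(1) by blast
    then have "m = mnorm v (- p)" "- p \<in> fst v" "fst (snd v (- p)) = \<alpha>"
      using w unfolding mnorm_def by (auto simp: linv_def)
    then show ?thesis using \<open>v \<in> F\<close> unfolding marked_set_def by blast
  qed
qed

lemma marked_set_marked_string:
  assumes walks: "\<forall>w\<in>F. is_walk Ab s t Rb w" and "m \<in> marked_set F \<alpha>"
  shows "marked_string (ok_pair Ab s t Rb) \<alpha> m"
proof -
  obtain w p where w: "w \<in> F \<union> wrev ` F" "p \<in> fst w" "snd w p = (\<alpha>, True)" "m = wshift w p"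
    using \<open>m \<in> marked_set F \<alpha>\<close> unfolding marked_set_eq by blast
  then have "maximal_string (ok_pair Ab s t Rb) w"
    using walks is_walk_maximal_string maximal_string_wrev by blast
  then show ?thesis
    unfolding marked_string_def using w by (simp add: maximal_string_wshift)
qed

lemma marked_set_finite_cofinal:
  assumes det: "direct_deterministic (ok_pair Ab s t Rb)"
    and "finite F" and walks: "\<forall>w\<in>F. is_walk Ab s t Rb w"
  shows "\<exists>S. finite S \<and> S \<subseteq> marked_set F \<alpha> \<and> (\<forall>m\<in>marked_set F \<alpha>. \<exists>n\<in>S. cc_le m n)"
proof -
  define G where "G = F \<union> wrev ` F"
  have "maximal_string (ok_pair Ab s t Rb) w \<and> regular_ends w" if "w \<in> G" for w
  proof (cases "w \<in> F")
    case True
    then have "is_walk Ab s t Rb w" using walks by blast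
    then show ?thesis using is_walk_maximal_string is_walk_regular_ends by blast
  next
    case False
    then obtain v where "v \<in> F" "w = wrev v" using \<open>w \<in> G\<close> unfolding G_def by blast
    then have "is_walk Ab s t Rb v" using walks by blast
    then show ?thesis
      using \<open>w = wrev v\<close> is_walk_maximal_string is_walk_regular_ends maximal_string_wrev
        regular_ends_wrev by blast
  qed
  then have "\<forall>w\<in>G. \<exists>V. finite V \<and> V \<subseteq> fst w \<and> (\<forall>p\<in>fst w. snd (snd w p) \<longrightarrow>
      (\<exists>p'\<in>V. snd w p' = snd w p \<and> cc_le (wshift w p) (wshift w p')))"
    using marking_window[OF det] by blast
  from bchoice[OF this] obtain W where W: "\<forall>w\<in>G. finite (W w) \<and> W w \<subseteq> fst w \<and>
      (\<forall>p\<in>fst w. snd (snd w p) \<longrightarrow>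
         (\<exists>p'\<in>W w. snd w p' = snd w p \<and> cc_le (wshift w p) (wshift w p')))"
    by blast
  define S where "S = {wshift w p | w p. w \<in> G \<and> p \<in> W w \<and> snd w p = (\<alpha>, True)}"
  have "S \<subseteq> (\<Union>w\<in>G. wshift w ` W w)" unfolding S_def by blast
  moreover have "finite (\<Union>w\<in>G. wshift w ` W w)"
    using \<open>finite F\<close> W unfolding G_def by simp
  ultimately have "finite S" by (rule finite_subset)
  moreover have "S \<subseteq> marked_set F \<alpha>"
    using W unfolding S_def marked_set_eq G_def by blast
  moreover have "\<exists>n\<in>S. cc_le m n" if m: "m \<in> marked_set F \<alpha>" for m
  proof -
    obtain w p where w: "w \<in> G" "p \<in> fst w" "snd w p = (\<alpha>, True)" "m = wshift w p"
      using m unfolding marked_set_eq G_def by blast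
    with W obtain p' where "p' \<in> W w" "snd w p' = (\<alpha>, True)" "cc_le m (wshift w p')"
      by (metis snd_conv)
    then show ?thesis using \<open>w \<in> G\<close> unfolding S_def by blast
  qed
  ultimately show ?thesis by blast
qed

theorem lemma5p7:
  fixes V Vb :: "'v set" and A Ab :: "'a set" and s t :: "'a \<Rightarrow> 'v"
    and R Rb :: "('a \<times> 'a) set" and F :: "'a walkrep set" and \<alpha> :: 'a
  assumes "locally_gentle V A s t R"
    and "blossoming V A R Vb Ab Rb s t"
    and "finite F"
    and "nk_face Ab s t Rb F"
    and "\<alpha> \<in> Ab"
  shows "marked_set F \<alpha> = {} \<or>
         (\<exists>m\<in>marked_set F \<alpha>. \<forall>n\<in>marked_set F \<alpha>. \<not> cc_less m n)"
proof -
  have "locally_gentle Vb Ab s t Rb" using assms(2) unfolding blossoming_def by blast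
  then have det: "direct_deterministic (ok_pair Ab s t Rb)"
    by (rule locally_gentle_direct_deterministic)
  have walks: "\<forall>w\<in>F. is_walk Ab s t Rb w"
    using assms(4) unfolding nk_face_def by blast
  obtain S where S: "finite S" "S \<subseteq> marked_set F \<alpha>" "\<forall>m\<in>marked_set F \<alpha>. \<exists>n\<in>S. cc_le m n"
    using marked_set_finite_cofinal[OF det assms(3) walks, of \<alpha>] by (elim exE conjE)
  have trans: "cc_less m q"
    if "m \<in> marked_set F \<alpha>" "n \<in> marked_set F \<alpha>" "q \<in> marked_set F \<alpha>" "cc_less m n" "cc_less n q"
    for m n q
    using cc_less_trans[OF det marked_set_marked_string[OF walks that(1)]
        marked_set_marked_string[OF walks that(2)] marked_set_marked_string[OF walks that(3)]
        that(4,5)] .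
  show ?thesis
  proof (cases "marked_set F \<alpha> = {}")
    case False
    show ?thesis
      using finite_cofinal_has_maximal[OF S(1,2) False, of cc_less] S(3) cc_less_irrefl trans
      unfolding cc_le_def by blast
  qed simp
qed

end
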